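(* Let $\beta\in(0,1)$, $d\in\{1,2,3\}$, and for $k\in\mathbb N\cup\{0\}$ define $a_k^d(\beta):=\mathbb E\big(D_1^{-\beta(k-\frac d4)}\big)=\int_0^\infty w^{-\beta(k-\frac d4)}g_\beta(w)\,dw$. Then for every integer $k\ge 1$, $$\frac{a_k^d(\beta)\sqrt{\Gamma\big(1+\beta(2k-\frac d2)\big)}}{k!}\le\frac{3\sqrt{2\beta(k-\frac d4)}\sqrt{\Gamma\big(2\beta(1-\frac d4)\big)}}{\Gamma(1+\beta)}\,2^{\beta(k-1)}.$$
   Context: $D_1$ is a positive $\beta$-stable random variable with Laplace transform $\mathbb E e^{-sD_1}=e^{-s^\beta}$, and $g_\beta$ denotes its density. *)

theory Defs
  imports "HOL-Analysis.Analysis"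
begin

text \<open>g is the density (on (0,\<infinity>)) of a positive beta-stable random variable D_1,
  characterised by its Laplace transform: E exp(-s D_1) = exp(-s^beta) for all s \<ge> 0.\<close>
definition positive_stable_density :: "real \<Rightarrow> (real \<Rightarrow> real) \<Rightarrow> bool" where
  "positive_stable_density \<beta> g \<longleftrightarrow>
     g \<in> borel_measurable lborel \<and>
     (\<forall>w. g w \<ge> 0) \<and> (\<forall>w\<le>0. g w = 0) \<and>
     (\<forall>s\<ge>0. set_integrable lborel {0<..} (\<lambda>w. exp (- s * w) * g w) \<and>
        (LINT w:{0<..}|lborel. exp (- s * w) * g w) = exp (- (s powr \<beta>)))"

definition stable_moment_a :: "(real \<Rightarrow> real) \<Rightarrow> real \<Rightarrow> nat \<Rightarrow> nat \<Rightarrow> real" where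
  "stable_moment_a g \<beta> d k =
     (LINT w:{0<..}|lborel. w powr (- \<beta> * (real k - real d / 4)) * g w)"

end

theory Submission
  imports Defs
begin

text \<open>
  Since \<open>\<Gamma>(p) w powr -p = \<integral>\<^sub>0\<^sup>\<infinity> s powr (p - 1) exp (-s w) ds\<close>, Tonelli's theorem turns
  the negative moments of \<open>D\<^sub>1\<close> into integrals of its Laplace transform \<open>exp (-s powr \<beta>)\<close>,
  which are again Euler integrals: \<open>E D\<^sub>1 powr (-\<beta>q) = \<Gamma>(1 + q) / \<Gamma>(1 + \<beta>q)\<close>.
  For \<open>q = k - d/4\<close> the left-hand side is therefore
  \<open>\<Gamma>(1 + q) / k! * sqrt \<Gamma>(1 + 2\<beta>q) / \<Gamma>(1 + \<beta>q)\<close>; the first factor is at most 1 by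
  log-convexity of \<open>\<Gamma>\<close>, the second at most \<open>2 powr \<beta>q\<close> by Legendre's duplication formula.
  Finally \<open>\<beta>q = r/2 + \<beta>(k - 1)\<close> with \<open>r = 2\<beta>(1 - d/4) \<in> (0, 2]\<close>, and
  \<open>2 powr (r/2) \<le> 3 sqrt (r \<Gamma>(r))\<close> because \<open>\<Gamma> \<ge> 1/2\<close> on \<open>[1, \<infinity>)\<close>.
\<close>

lemma Gamma_one_plus_real: "x > 0 \<Longrightarrow> Gamma (1 + x) = x * Gamma (x :: real)"
  using Gamma_plus1[of x] nonpos_Ints_nonpos[of x] by (force simp: add.commute)

lemma convex_on_ln_Gamma: "convex_on {0<..} (\<lambda>x::real. ln (Gamma x))"
  using log_convex_Gamma_real by (simp add: o_def)

lemma Gamma_le_fact_between: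
  fixes x :: real and k :: nat
  assumes k: "k \<ge> 1" and x: "real k \<le> x" "x \<le> real k + 1"
  shows "Gamma x \<le> fact k"
proof -
  have "ln (Gamma x) \<le> max (ln (Gamma (real k))) (ln (Gamma (real k + 1)))"
    by (rule convex_on_le_max[OF convex_on_subset[OF convex_on_ln_Gamma]]) (use k x in auto)
  moreover have "Gamma (real k) = fact (k - 1)" and "Gamma (real k + 1) = fact k"
    using Gamma_fact[of "k - 1", where 'a = real] Gamma_fact[of k, where 'a = real] k
    by (simp_all add: of_nat_diff add.commute)
  moreover have "(fact (k - 1) :: real) \<le> fact k"
    by (intro fact_mono) auto
  ultimately have "ln (Gamma x) \<le> ln (fact k)"
    by (smt (verit) fact_gt_zero ln_le_cancel_iff)
  then show ?thesis
    using x k by (subst (asm) ln_le_cancel_iff) auto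
qed

lemma Gamma_real_ge_half:
  fixes x :: real
  assumes "x \<ge> 1"
  shows "Gamma x \<ge> 1 / 2"
proof (cases "x < 2")
  case True
  let ?f = "\<lambda>x::real. ln (Gamma x)"
  have "(?f x - ?f 2) / (x - 2) \<le> (?f x - ?f 3) / (x - 3)"
    by (rule convex_on_slope_le(1)[OF convex_on_ln_Gamma]) (use assms True in auto)
  also have "\<dots> \<le> (?f 2 - ?f 3) / (2 - 3)"
    by (rule convex_on_slope_le(2)[OF convex_on_ln_Gamma]) (use assms True in auto)
  also have "\<dots> = ln 2"
    using Gamma_fact[of 1, where 'a = real] Gamma_fact[of 2, where 'a = real]
    by (simp add: eval_nat_numeral)
  finally have "?f x \<ge> (x - 2) * ln 2"
    using Gamma_fact[of 1, where 'a = real] True by (simp add: field_simps)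
  moreover have "(x - 2) * ln 2 \<ge> ln (1 / 2)"
    using assms by (simp add: ln_div algebra_simps)
  ultimately have "ln (1 / 2) \<le> ln (Gamma x)"
    by linarith
  then show ?thesis
    using assms by (subst (asm) ln_le_cancel_iff) auto
next
  case False
  then have "Gamma 2 \<le> Gamma x"
    using Gamma_real_strict_mono[of 2 x] by (cases "x = 2") auto
  then show ?thesis
    using Gamma_fact[of 1, where 'a = real] by simp
qed

lemma Gamma_one_plus_le_one:
  fixes x :: real
  assumes "0 \<le> x" "x \<le> 1"
  shows "Gamma (1 + x) \<le> 1"
  using Gamma_le_fact_between[of 1 "1 + x"] assms by simp

lemma two_powr_half_le_sqrt_Gamma:
  fixes r s :: real
  assumes r: "0 < r" "r \<le> 2" and "r \<le> s"
  shows "2 powr (r / 2) \<le> 3 * sqrt s * sqrt (Gamma r)"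
proof (rule power2_le_imp_le)
  have "(2 powr (r / 2))\<^sup>2 = 2 powr r"
    by (simp add: powr_power)
  also have "\<dots> \<le> 2 powr 2"
    using r by (intro powr_mono) auto
  also have "\<dots> \<le> 9 * Gamma (1 + r)"
    using Gamma_real_ge_half[of "1 + r"] r by simp
  also have "\<dots> \<le> 9 * (s * Gamma r)"
    using assms Gamma_real_pos[OF r(1)] by (simp add: Gamma_one_plus_real mult_right_mono)
  also have "\<dots> = (3 * sqrt s * sqrt (Gamma r))\<^sup>2"
    using assms Gamma_real_pos[OF r(1)] by (simp add: power_mult_distrib)
  finally show "(2 powr (r / 2))\<^sup>2 \<le> (3 * sqrt s * sqrt (Gamma r))\<^sup>2" .
qed (use assms in simp)

lemma Gamma_legendre_duplication_real:
  fixes z :: real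
  assumes "z > 0"
  shows "Gamma z * Gamma (z + 1/2) = 2 powr (1 - 2 * z) * sqrt pi * Gamma (2 * z)"
proof -
  have "complex_of_real z \<notin> \<int>\<^sub>\<le>\<^sub>0" "complex_of_real z + 1/2 \<notin> \<int>\<^sub>\<le>\<^sub>0"
    using assms by (auto elim!: nonpos_Ints_cases simp: complex_eq_iff)
  from Gamma_legendre_duplication[OF this]
  have "complex_of_real (Gamma z * Gamma (z + 1/2))
      = complex_of_real (exp ((1 - 2 * z) * ln 2) * sqrt pi * Gamma (2 * z))"
    by (simp add: Gamma_complex_of_real[symmetric] exp_of_real[symmetric])
  then have "Gamma z * Gamma (z + 1/2) = exp ((1 - 2 * z) * ln 2) * sqrt pi * Gamma (2 * z)"
    by (simp only: of_real_eq_iff)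
  then show ?thesis
    by (simp add: powr_def)
qed

lemma Gamma_plus_half_le:
  fixes p :: real
  assumes p: "p > 0"
  shows "Gamma (p + 1/2) \<le> sqrt pi * Gamma (p + 1)"
proof -
  let ?f = "\<lambda>x::real. ln (Gamma x)"
  have "(?f (1/2) - ?f 1) / (1/2 - 1) \<le> (?f (1/2) - ?f (p + 1)) / (1/2 - (p + 1))"
    by (rule convex_on_slope_le(1)[OF convex_on_ln_Gamma]) (use p in auto)
  also have "\<dots> \<le> (?f (p + 1/2) - ?f (p + 1)) / ((p + 1/2) - (p + 1))"
    by (rule convex_on_slope_le(2)[OF convex_on_ln_Gamma]) (use p in auto)
  finally have "ln (Gamma (p + 1/2)) \<le> ln (sqrt pi) + ln (Gamma (p + 1))"
    by (simp add: Gamma_one_half_real field_simps)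
  also have "\<dots> = ln (sqrt pi * Gamma (p + 1))"
  proof -
    have "Gamma (p + 1) > 0" using p by simp
    then show ?thesis by (simp add: ln_mult)
  qed
  finally show ?thesis
    using p by (subst (asm) ln_le_cancel_iff) auto
qed

lemma sqrt_Gamma_double_le:
  fixes p :: real
  assumes p: "p > 0"
  shows "sqrt (Gamma (1 + 2 * p)) \<le> 2 powr p * Gamma (1 + p)"
proof -
  have "Gamma (p + 1/2) * Gamma (p + 1) = 2 powr (- 2 * p) * sqrt pi * Gamma (1 + 2 * p)"
    using Gamma_legendre_duplication_real[of "p + 1/2"] p by (simp add: algebra_simps)
  then have "Gamma (1 + 2 * p) = (2 powr p)\<^sup>2 * Gamma (p + 1/2) * Gamma (p + 1) / sqrt pi"
    by (simp add: powr_minus field_simps power2_eq_square powr_mult_base powr_add[symmetric])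
  also have "\<dots> \<le> (2 powr p)\<^sup>2 * (sqrt pi * Gamma (p + 1)) * Gamma (p + 1) / sqrt pi"
    using Gamma_plus_half_le[OF p] p
    by (intro divide_right_mono mult_right_mono mult_left_mono) auto
  also have "\<dots> = (2 powr p * Gamma (1 + p))\<^sup>2"
    by (simp add: power2_eq_square add.commute)
  finally show ?thesis
    using p by (intro real_le_lsqrt) auto
qed

lemma nn_integral_powr_exp_neg_powr:
  fixes a q c :: real
  assumes a: "a > 0" and q: "q > 0" and c: "c > 0"
  shows "(\<integral>\<^sup>+ s \<in> {0<..}. ennreal (s powr (a * q - 1) * exp (- c * s powr a)) \<partial>lborel)
           = ennreal (Gamma q / (a * c powr q))"
proof -
  define f where "f = (\<lambda>t::real. t powr (q - 1) / exp t)"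
  have "(f has_integral Gamma q) {0..}"
    unfolding f_def by (rule Gamma_integral_real[OF q])
  then have "((\<lambda>t. if t \<in> {0<..} then f t else 0) has_integral Gamma q) {0..}"
    by (rule has_integral_spike [of "{0}", rotated 2]) auto
  then have f_int: "(f has_integral Gamma q) {0<..}"
    by (subst (asm) has_integral_restrict) auto
  then have f_abs: "f absolutely_integrable_on {0<..}"
    unfolding f_def
    by (subst absolutely_integrable_on_iff_nonneg) (auto simp: has_integral_integrable)
  define \<phi> where "\<phi> = (\<lambda>s::real. c * s powr a)"
  define \<phi>' where "\<phi>' = (\<lambda>s::real. c * (a * s powr (a - 1)))"
  have \<phi>_deriv: "(\<phi> has_field_derivative \<phi>' s) (at s within {0<..})" if "s \<in> {0<..}" for s
    unfolding \<phi>_def \<phi>'_def using that by (auto intro!: derivative_eq_intros)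
  have \<phi>_inv: "\<phi> ((t / c) powr (1 / a)) = t" if "t > 0" for t
    using that a c by (simp add: \<phi>_def powr_powr)
  have "inj_on \<phi> {0<..}"
    by (rule inj_on_inverseI[where g = "\<lambda>t. (t / c) powr (1 / a)"])
       (use a c in \<open>simp add: \<phi>_def powr_powr\<close>)
  moreover have "\<phi> ` {0<..} = {0<..}"
  proof (intro antisym subsetI)
    fix t :: real assume "t \<in> {0<..}"
    then show "t \<in> \<phi> ` {0<..}"
      using \<phi>_inv[of t] c by (intro image_eqI[where x = "(t / c) powr (1 / a)"]) auto
  qed (use c in \<open>auto simp: \<phi>_def\<close>)
  ultimately have "(\<lambda>s. \<bar>\<phi>' s\<bar> * f (\<phi> s)) absolutely_integrable_on {0<..}
      \<and> integral {0<..} (\<lambda>s. \<bar>\<phi>' s\<bar> * f (\<phi> s)) = Gamma q"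
    using has_absolute_integral_change_of_variables_1'[of "{0<..}" \<phi> \<phi>' f "Gamma q", OF _ \<phi>_deriv]
      f_abs f_int
    by (auto simp: integral_unique)
  then have "((\<lambda>s. \<bar>\<phi>' s\<bar> * f (\<phi> s)) has_integral Gamma q) {0<..}"
    by (metis absolutely_integrable_on_def integrable_integral)
  moreover have "\<bar>\<phi>' s\<bar> * f (\<phi> s) = a * c powr q * (s powr (a * q - 1) * exp (- c * s powr a))"
    if "s \<in> {0<..}" for s
  proof -
    have "\<bar>\<phi>' s\<bar> * f (\<phi> s)
        = a * c powr q * (s powr (a - 1) * s powr (a * (q - 1))) * exp (- c * s powr a)"
      using that a c
      by (simp add: \<phi>'_def \<phi>_def f_def powr_mult powr_powr exp_minus powr_mult_base field_simps)
    also have "s powr (a - 1) * s powr (a * (q - 1)) = s powr (a * q - 1)"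
      using that by (simp add: powr_add[symmetric] algebra_simps)
    finally show ?thesis by simp
  qed
  ultimately have "((\<lambda>s. a * c powr q * (s powr (a * q - 1) * exp (- c * s powr a)))
      has_integral Gamma q) {0<..}"
    by (rule has_integral_eq[rotated]) auto
  then have "((\<lambda>s. s powr (a * q - 1) * exp (- c * s powr a))
      has_integral Gamma q / (a * c powr q)) {0<..}"
    using a c by (subst (asm) has_integral_mult_right_iff) auto
  then show ?thesis
    by (rule nn_integral_has_integral_lebesgue'[rotated]) auto
qed

lemma nn_integral_neg_powr_via_laplace:
  fixes g :: "real \<Rightarrow> real" and p :: real
  assumes g_meas [measurable]: "g \<in> borel_measurable borel"
    and g_nonneg: "\<And>w. 0 \<le> g w" and p: "p > 0"
  shows "ennreal (Gamma p) * (\<integral>\<^sup>+ w \<in> {0<..}. ennreal (w powr (- p) * g w) \<partial>lborel)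
           = (\<integral>\<^sup>+ s \<in> {0<..}. ennreal (s powr (p - 1)) *
                (\<integral>\<^sup>+ w \<in> {0<..}. ennreal (exp (- s * w) * g w) \<partial>lborel) \<partial>lborel)"
proof -
  have inner: "ennreal (Gamma p) * (ennreal (w powr (- p) * g w) * indicator {0<..} w)
      = (\<integral>\<^sup>+ s \<in> {0<..}. ennreal (s powr (p - 1)) *
           (ennreal (exp (- s * w) * g w) * indicator {0<..} w) \<partial>lborel)"
    for w :: real
  proof (cases "w > 0")
    case True
    have "(\<integral>\<^sup>+ s \<in> {0<..}. ennreal (s powr (p - 1) * exp (- s * w)) \<partial>lborel)
        = (\<integral>\<^sup>+ s \<in> {0<..}. ennreal (s powr (1 * p - 1) * exp (- w * s powr 1)) \<partial>lborel)"
      by (intro nn_integral_cong) (simp split: split_indicator add: mult.commute)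
    also have "\<dots> = ennreal (Gamma p * w powr (- p))"
      using nn_integral_powr_exp_neg_powr[of 1 p w] p True by (simp add: powr_minus divide_inverse)
    finally have gamma: "(\<integral>\<^sup>+ s \<in> {0<..}. ennreal (s powr (p - 1) * exp (- s * w)) \<partial>lborel)
        = ennreal (Gamma p * w powr (- p))" .
    have "(\<integral>\<^sup>+ s \<in> {0<..}. ennreal (s powr (p - 1)) *
             (ennreal (exp (- s * w) * g w) * indicator {0<..} w) \<partial>lborel)
        = (\<integral>\<^sup>+ s. ennreal (g w) * (ennreal (s powr (p - 1) * exp (- s * w)) * indicator {0<..} s) \<partial>lborel)"
      using True g_nonneg[of w]
      by (intro nn_integral_cong) (simp add: ennreal_mult'[symmetric] mult_ac split: split_indicator)
    also have "\<dots> = ennreal (g w) * ennreal (Gamma p * w powr (- p))"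
      by (subst nn_integral_cmult) (use gamma in auto)
    finally show ?thesis
      using True g_nonneg[of w] p by (simp add: ennreal_mult'[symmetric] mult_ac)
  qed simp
  have "ennreal (Gamma p) * (\<integral>\<^sup>+ w \<in> {0<..}. ennreal (w powr (- p) * g w) \<partial>lborel)
      = (\<integral>\<^sup>+ w. (\<integral>\<^sup>+ s \<in> {0<..}. ennreal (s powr (p - 1)) *
           (ennreal (exp (- s * w) * g w) * indicator {0<..} w) \<partial>lborel) \<partial>lborel)"
    by (subst nn_integral_cmult[symmetric]) (auto simp: inner)
  also have "\<dots> = (\<integral>\<^sup>+ s. \<integral>\<^sup>+ w. ennreal (s powr (p - 1)) *
           (ennreal (exp (- s * w) * g w) * indicator {0<..} w) * indicator {0<..} s \<partial>lborel \<partial>lborel)"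
    by (subst lborel_pair.Fubini') (auto simp: case_prod_unfold)
  also have "\<dots> = (\<integral>\<^sup>+ s \<in> {0<..}. ennreal (s powr (p - 1)) *
                (\<integral>\<^sup>+ w \<in> {0<..}. ennreal (exp (- s * w) * g w) \<partial>lborel) \<partial>lborel)"
    by (intro nn_integral_cong) (auto simp: nn_integral_multc nn_integral_cmult split: split_indicator)
  finally show ?thesis .
qed

lemma positive_stable_density_laplace:
  assumes "positive_stable_density \<beta> g" and "s \<ge> 0"
  shows "(\<integral>\<^sup>+ w \<in> {0<..}. ennreal (exp (- s * w) * g w) \<partial>lborel) = ennreal (exp (- (s powr \<beta>)))"
proof -
  have "set_integrable lborel {0<..} (\<lambda>w. exp (- s * w) * g w)"
    and "(LINT w:{0<..}|lborel. exp (- s * w) * g w) = exp (- (s powr \<beta>))"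
    and "\<And>w. g w \<ge> 0"
    using assms by (auto simp: positive_stable_density_def)
  then show ?thesis
    unfolding set_integrable_def set_lebesgue_integral_def
    by (subst nn_integral_set_ennreal, subst nn_integral_eq_integral) (auto simp: mult.commute)
qed

lemma positive_stable_density_neg_powr_moment:
  fixes \<beta> q :: real and g :: "real \<Rightarrow> real"
  assumes \<beta>: "\<beta> > 0" and g: "positive_stable_density \<beta> g" and q: "q > 0"
  shows "(LINT w:{0<..}|lborel. w powr (- (\<beta> * q)) * g w) = Gamma (1 + q) / Gamma (1 + \<beta> * q)"
proof -
  have g_meas [measurable]: "g \<in> borel_measurable borel" and g_nonneg: "\<And>w. g w \<ge> 0"
    using g by (auto simp: positive_stable_density_def)
  have \<beta>q: "\<beta> * q > 0" using \<beta> q by simp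
  define I where "I = (\<integral>\<^sup>+ w \<in> {0<..}. ennreal (w powr (- (\<beta> * q)) * g w) \<partial>lborel)"
  have "ennreal (Gamma (\<beta> * q)) * I
      = (\<integral>\<^sup>+ s \<in> {0<..}. ennreal (s powr (\<beta> * q - 1)) * ennreal (exp (- (s powr \<beta>))) \<partial>lborel)"
    unfolding I_def nn_integral_neg_powr_via_laplace[OF g_meas g_nonneg \<beta>q]
    using positive_stable_density_laplace[OF g]
    by (intro nn_integral_cong) (auto split: split_indicator)
  also have "\<dots> = (\<integral>\<^sup>+ s \<in> {0<..}. ennreal (s powr (\<beta> * q - 1) * exp (- 1 * s powr \<beta>)) \<partial>lborel)"
    by (intro nn_integral_cong) (simp add: ennreal_mult')
  also have "\<dots> = ennreal (Gamma q / \<beta>)"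
    using nn_integral_powr_exp_neg_powr[OF \<beta> q zero_less_one] by simp
  finally have Gamma_I: "ennreal (Gamma (\<beta> * q)) * I = ennreal (Gamma q / \<beta>)" .
  have "I = ennreal (1 / Gamma (\<beta> * q)) * (ennreal (Gamma (\<beta> * q)) * I)"
    using Gamma_real_pos[OF \<beta>q] by (simp add: mult.assoc[symmetric] ennreal_mult'[symmetric])
  also have "\<dots> = ennreal (Gamma q / (\<beta> * Gamma (\<beta> * q)))"
    unfolding Gamma_I using \<beta> \<beta>q q by (simp add: ennreal_mult'[symmetric])
  finally have I: "I = ennreal (Gamma q / (\<beta> * Gamma (\<beta> * q)))" .
  have "(LINT w:{0<..}|lborel. w powr (- (\<beta> * q)) * g w) = enn2real I"
    unfolding set_lebesgue_integral_def I_def nn_integral_set_ennreal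
    by (subst integral_eq_nn_integral) (auto simp: g_nonneg mult.commute)
  also have "\<dots> = Gamma q / (\<beta> * Gamma (\<beta> * q))"
    unfolding I using \<beta> \<beta>q q by simp
  also have "\<dots> = Gamma (1 + q) / Gamma (1 + \<beta> * q)"
    using \<beta> q by (simp add: Gamma_one_plus_real)
  finally show ?thesis .
qed

theorem lemma2p5:
  fixes \<beta> :: real and d k :: nat and g :: "real \<Rightarrow> real"
  assumes "0 < \<beta>" and "\<beta> < 1"
    and "d \<in> {1, 2, 3}"
    and "positive_stable_density \<beta> g"
    and "k \<ge> 1"
  shows "stable_moment_a g \<beta> d k * sqrt (Gamma (1 + \<beta> * (2 * real k - real d / 2))) / fact k
         \<le> 3 * sqrt (2 * \<beta> * (real k - real d / 4)) * sqrt (Gamma (2 * \<beta> * (1 - real d / 4)))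
             / Gamma (1 + \<beta>) * 2 powr (\<beta> * (real k - 1))"
proof -
  define q where "q = real k - real d / 4"
  define p where "p = \<beta> * q"
  define r where "r = 2 * \<beta> * (1 - real d / 4)"
  have d: "1 \<le> real d" "real d \<le> 3"
    using assms(3) by auto
  have q: "0 < q" "real k \<le> 1 + q" "1 + q \<le> real k + 1"
    using d assms(5) by (auto simp: q_def)
  have p: "0 < p" "p = r / 2 + \<beta> * (real k - 1)"
    using q assms(1) by (auto simp: p_def q_def r_def field_simps)
  have "\<beta> * (1 - real d / 4) \<le> 1 * 1"
    using d assms(1,2) by (intro mult_mono) auto
  then have r: "0 < r" "r \<le> 2" "r \<le> 2 * \<beta> * (real k - real d / 4)"
    using d assms(1,5) by (auto simp: r_def intro!: mult_left_mono)
  have Gamma_\<beta>: "0 < Gamma (1 + \<beta>)" "Gamma (1 + \<beta>) \<le> 1"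
    using Gamma_one_plus_le_one[of \<beta>] assms(1,2) by auto
  have "stable_moment_a g \<beta> d k * sqrt (Gamma (1 + \<beta> * (2 * real k - real d / 2))) / fact k
      = Gamma (1 + q) / fact k * (sqrt (Gamma (1 + 2 * p)) / Gamma (1 + p))"
    using positive_stable_density_neg_powr_moment[OF assms(1,4) q(1)]
    by (simp add: stable_moment_a_def p_def q_def algebra_simps)
  also have "\<dots> \<le> 1 * (2 powr (r / 2) * 2 powr (\<beta> * (real k - 1)))"
    using Gamma_le_fact_between[OF assms(5) q(2,3)] sqrt_Gamma_double_le[OF p(1)] p
    by (intro mult_mono) (auto simp: divide_le_eq powr_add[symmetric])
  also have "\<dots> = 2 powr (r / 2) * 2 powr (\<beta> * (real k - 1))"
    by simp
  also have "\<dots> \<le> 3 * sqrt (2 * \<beta> * (real k - real d / 4)) * sqrt (Gamma r) / Gamma (1 + \<beta>)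
                    * 2 powr (\<beta> * (real k - 1))"
    using two_powr_half_le_sqrt_Gamma[OF r] Gamma_\<beta>
    by (intro mult_right_mono) (auto simp: le_divide_eq intro!: order_trans[OF mult_left_le])
  finally show ?thesis
    unfolding r_def by simp
qed

end
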